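(* Let $\delta\in(0,1)$ and suppose $N\le 1000\ell n^{(1-\delta)\ell}$ and $\ell\ge 20$. Then with probability at least $0.95$ over a sample $G'\sim\mathrm{RGP}_{N,\ell}\circ\mathcal{G}(n,\tfrac12)$, with $G'=(\{S_i\}_{i\in[N]},E')$, the following event occurs: for every $M\subseteq[N]$ with $|M|\le n^{0.99\delta}/\ell$, we have $\left|\bigcup_{i\in M}S_i\right|\ge 0.01\delta|M|\ell$.
   Context: $\mathcal{G}(n,\tfrac12)$ is the Erdős–Rényi distribution on $n$-vertex graphs with edge probability $1/2$. Randomized graph product: given an $n$-vertex graph $G=(V,E)$ and positive integers $N,\ell$, the random graph $G'\sim\mathrm{RGP}_{N,\ell}(G)$ is constructed as follows. For each $i\in[N]$, independently sample $\ell$ vertices uniformly at random from $V$ and let $S_i\subseteq V$ be the set of sampled vertices. The vertex set is $\{S_1,\dots,S_N\}$ (one vertex per index $i$), and for distinct $i,j$, $S_i,S_j$ are adjacent iff $S_i\cup S_j$ induces a clique in $G$. $\mathrm{RGP}_{N,\ell}\circ\mathcal{G}(n,\tfrac12)$ denotes sampling $G\sim\mathcal{G}(n,\tfrac12)$ and then $G'\sim\mathrm{RGP}_{N,\ell}(G)$. *)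

theory Defs
  imports "HOL-Probability.Probability"
begin

definition all_edges :: "nat \<Rightarrow> nat set set" where
  "all_edges n = {e. e \<subseteq> {..<n} \<and> card e = 2}"

text \<open>Erdos-Renyi G(n,1/2): uniform distribution on all edge sets
  (equivalently, every potential edge independently with probability 1/2).\<close>
definition gnp_half :: "nat \<Rightarrow> nat set set pmf" where
  "gnp_half n = pmf_of_set (Pow (all_edges n))"

definition is_clique :: "nat set set \<Rightarrow> nat set \<Rightarrow> bool" where
  "is_clique E A \<longleftrightarrow> (\<forall>u\<in>A. \<forall>v\<in>A. u \<noteq> v \<longrightarrow> {u, v} \<in> E)"

text \<open>Each S i is the set of l independent uniform samples
  (with replacement) from {0..<n}.\<close>
definition rgp :: "nat \<Rightarrow> nat \<Rightarrow> nat \<Rightarrow> nat set set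
    \<Rightarrow> ((nat \<Rightarrow> nat set) \<times> (nat \<Rightarrow> nat \<Rightarrow> bool)) pmf" where
  "rgp N l n E =
     map_pmf (\<lambda>xs. let S = (\<lambda>i. set (xs i)) in
                (S, \<lambda>i j. i < N \<and> j < N \<and> i \<noteq> j \<and> is_clique E (S i \<union> S j)))
       (Pi_pmf {..<N} [] (\<lambda>_. replicate_pmf l (pmf_of_set {..<n})))"

definition rgp_gnp :: "nat \<Rightarrow> nat \<Rightarrow> nat
    \<Rightarrow> ((nat \<Rightarrow> nat set) \<times> (nat \<Rightarrow> nat \<Rightarrow> bool)) pmf" where
  "rgp_gnp N l n = bind_pmf (gnp_half n) (\<lambda>E. rgp N l n E)"

end

theory Submission
  imports Defs
begin

text \<open>If some \<open>M\<close> with \<open>|M| = m\<close> has a union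
  of size at most \<open>K\<close>, then all \<open>S\<^sub>i\<close> with \<open>i \<in> M\<close> lie in the image of a single map
  \<open>f : [K] \<rightarrow> [n]\<close>, which has probability at most \<open>(K/n)^(lm)\<close>. In the union bound over the
  \<open>N^m\<close> choices of \<open>M\<close> and \<open>n^K\<close> choices of \<open>f\<close>, the bounds \<open>K \<le> \<delta>lm/100\<close>,
  \<open>lm \<le> n^(0.99\<delta>)\<close> and \<open>N \<le> 1000 l n^((1-\<delta>)l)\<close> make the powers of \<open>n\<close> cancel exactly,
  leaving \<open>(1000 l (\<delta>/100)^l)^m \<le> 100^(-m)\<close>. Summing over \<open>m \<ge> 1\<close> bounds the failure
  probability by \<open>1/99\<close>.\<close>

lemma prob_replicate_pmf_set_subset:
  fixes p :: "'a::countable pmf"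
  shows "measure_pmf.prob (replicate_pmf l p) {ys. set ys \<subseteq> T} = measure_pmf.prob p T ^ l"
proof (induction l)
  case 0
  then show ?case by simp
next
  case (Suc l)
  have "replicate_pmf (Suc l) p = map_pmf (\<lambda>(x, xs). x # xs) (pair_pmf p (replicate_pmf l p))"
    by (simp add: pair_pmf_def map_pmf_def bind_assoc_pmf bind_return_pmf)
  moreover have "(\<lambda>(x, xs). x # xs) -` {ys. set ys \<subseteq> T} = T \<times> {ys. set ys \<subseteq> T}"
    by auto
  ultimately show ?case
    using Suc by (simp add: measure_pmf_prob_product)
qed

lemma prob_Pi_pmf_replicate_all_subset:
  fixes p :: "'a::countable pmf"
  assumes "finite A" "M \<subseteq> A"
  shows "measure_pmf.prob (Pi_pmf A d (\<lambda>_. replicate_pmf l p)) {xs. \<forall>i\<in>M. set (xs i) \<subseteq> T}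
           = measure_pmf.prob p T ^ (l * card M)"
proof -
  have "{xs. \<forall>i\<in>M. set (xs i) \<subseteq> T} = Pi A (\<lambda>i. if i \<in> M then {ys. set ys \<subseteq> T} else UNIV)"
    using assms(2) by (auto simp: Pi_def)
  then have "measure_pmf.prob (Pi_pmf A d (\<lambda>_. replicate_pmf l p)) {xs. \<forall>i\<in>M. set (xs i) \<subseteq> T}
      = (\<Prod>i\<in>A. if i \<in> M then measure_pmf.prob p T ^ l else 1)"
    using assms(1)
    by (simp add: measure_Pi_pmf_Pi if_distrib prob_replicate_pmf_set_subset cong: if_cong)
  also have "\<dots> = measure_pmf.prob p T ^ (l * card M)"
    using assms by (simp add: prod.If_cases Int_absorb1 power_mult)
  finally show ?thesis .
qed

lemma subset_image_PiE_lessThan: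
  assumes "finite U" "U \<subseteq> A" "card U \<le> K" "A \<noteq> {}"
  shows "\<exists>f \<in> {..<K} \<rightarrow>\<^sub>E A. U \<subseteq> f ` {..<K}"
proof -
  obtain a where a: "a \<in> A" using assms(4) by blast
  obtain xs where xs: "set xs = U" "distinct xs" using finite_distinct_list[OF assms(1)] by blast
  have len: "length xs \<le> K" using xs assms(3) distinct_card by fastforce
  define f where "f = restrict (\<lambda>j. if j < length xs then xs ! j else a) {..<K}"
  have "xs ! j \<in> A" if "j < length xs" for j using that xs(1) assms(2) nth_mem by blast
  then have "f \<in> {..<K} \<rightarrow>\<^sub>E A" using a by (auto simp: f_def)
  moreover have "U \<subseteq> f ` {..<K}"
  proof
    fix u assume "u \<in> U"
    then obtain j where "j < length xs" "xs ! j = u" using xs(1) by (auto simp: in_set_conv_nth)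
    then show "u \<in> f ` {..<K}" using len by (intro image_eqI[of _ _ j]) (auto simp: f_def)
  qed
  ultimately show ?thesis by blast
qed

lemma prob_small_union_le:
  fixes N l n m K :: nat
  assumes "n \<ge> 1"
  shows "measure_pmf.prob (Pi_pmf {..<N} d (\<lambda>_. replicate_pmf l (pmf_of_set {..<n})))
           {xs. \<exists>M \<subseteq> {..<N}. card M = m \<and> card (\<Union>i\<in>M. set (xs i)) \<le> K}
         \<le> real (N choose m) * real n ^ K * (real K / real n) ^ (l * m)"
proof -
  define P where "P = Pi_pmf {..<N} d (\<lambda>_. replicate_pmf l (pmf_of_set {..<n}))"
  define Ms where "Ms = {M. M \<subseteq> {..<N} \<and> card M = m}"
  define Fs where "Fs = {..<K} \<rightarrow>\<^sub>E {..<n}"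
  define Ev where
    "Ev = (\<lambda>M (f :: nat \<Rightarrow> nat). {xs :: nat \<Rightarrow> nat list. \<forall>i\<in>M. set (xs i) \<subseteq> f ` {..<K}})"
  have n_nonempty: "{..<n} \<noteq> {}" using assms by (simp add: lessThan_empty_iff)
  have support: "set (xs i) \<subseteq> {..<n}" if "xs \<in> set_pmf P" "i < N" for xs i
    using that n_nonempty by (auto simp: P_def set_Pi_pmf PiE_dflt_def set_replicate_pmf)
  have cover:
    "{xs :: nat \<Rightarrow> nat list. \<exists>M \<subseteq> {..<N}. card M = m \<and> card (\<Union>i\<in>M. set (xs i)) \<le> K}
       \<inter> set_pmf P \<subseteq> (\<Union>M\<in>Ms. \<Union>f\<in>Fs. Ev M f)"
  proof
    fix xs
    assume xs: "xs \<in> {xs. \<exists>M \<subseteq> {..<N}. card M = m \<and> card (\<Union>i\<in>M. set (xs i)) \<le> K} \<inter> set_pmf P"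
    then obtain M where M: "M \<in> Ms" "card (\<Union>i\<in>M. set (xs i)) \<le> K"
      by (auto simp: Ms_def)
    have "(\<Union>i\<in>M. set (xs i)) \<subseteq> {..<n}" using M(1) xs support by (auto simp: Ms_def)
    then obtain f where f: "f \<in> Fs" "(\<Union>i\<in>M. set (xs i)) \<subseteq> f ` {..<K}"
      using subset_image_PiE_lessThan[OF _ _ M(2) n_nonempty] finite_subset
      unfolding Fs_def by blast
    then have "xs \<in> Ev M f" by (auto simp: Ev_def)
    then show "xs \<in> (\<Union>M\<in>Ms. \<Union>f\<in>Fs. Ev M f)" using M(1) f(1) by blast
  qed
  have prob_Ev: "measure_pmf.prob P (Ev M f) \<le> (real K / real n) ^ (l * m)" if "M \<in> Ms" for M f
  proof -
    have "measure_pmf.prob (pmf_of_set {..<n}) (f ` {..<K}) = card ({..<n} \<inter> f ` {..<K}) / n"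
      using n_nonempty by (simp add: measure_pmf_of_set)
    also have "\<dots> \<le> real K / real n"
      using card_mono[of "f ` {..<K}" "{..<n} \<inter> f ` {..<K}"] card_image_le[of "{..<K}" f]
      by (intro divide_right_mono) auto
    finally show ?thesis
      using that by (simp add: P_def Ev_def Ms_def prob_Pi_pmf_replicate_all_subset power_mono)
  qed
  have "measure_pmf.prob P {xs. \<exists>M \<subseteq> {..<N}. card M = m \<and> card (\<Union>i\<in>M. set (xs i)) \<le> K}
      \<le> measure_pmf.prob P (\<Union>M\<in>Ms. \<Union>f\<in>Fs. Ev M f)"
    using cover by (subst measure_Int_set_pmf[symmetric]) (intro measure_pmf.finite_measure_mono, auto)
  also have "\<dots> \<le> (\<Sum>M\<in>Ms. \<Sum>f\<in>Fs. measure_pmf.prob P (Ev M f))"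
    by (rule order_trans[OF measure_UNION_le sum_mono[OF measure_UNION_le]])
       (auto simp: Ms_def Fs_def finite_PiE)
  also have "\<dots> \<le> (\<Sum>M\<in>Ms. \<Sum>f\<in>Fs. (real K / real n) ^ (l * m))"
    by (intro sum_mono prob_Ev)
  also have "\<dots> = real (N choose m) * real n ^ K * (real K / real n) ^ (l * m)"
    by (simp add: Ms_def Fs_def n_subsets card_PiE)
  finally show ?thesis by (simp add: P_def)
qed

lemma prob_rgp_gnp_fst:
  "measure_pmf.prob (rgp_gnp N l n) {G'. Q (fst G')} =
   measure_pmf.prob (Pi_pmf {..<N} [] (\<lambda>_. replicate_pmf l (pmf_of_set {..<n})))
     {xs. Q (\<lambda>i. set (xs i))}"
proof -
  have "map_pmf fst (rgp_gnp N l n) =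
        map_pmf (\<lambda>xs i. set (xs i)) (Pi_pmf {..<N} [] (\<lambda>_. replicate_pmf l (pmf_of_set {..<n})))"
    unfolding rgp_gnp_def rgp_def map_bind_pmf by (simp add: pmf.map_comp o_def Let_def)
  from arg_cong[OF this, of "\<lambda>p. measure_pmf.prob p {S. Q S}"] show ?thesis by simp
qed

lemma linear_times_hundredth_pow_le: "l \<ge> 20 \<Longrightarrow> 1000 * real l * (1/100) ^ l \<le> 1/100"
proof (induction l rule: dec_induct)
  case base
  then show ?case by (simp add: power_divide)
next
  case (step k)
  have "1000 * real (Suc k) * (1/100) ^ Suc k \<le> 1000 * (2 * real k) * ((1/100) ^ k / 100)"
    by (intro mult_mono) (use step in auto)
  also have "\<dots> \<le> 1000 * real k * (1/100) ^ k" by simp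
  finally show ?case using step by linarith
qed

lemma union_bound_term_le:
  fixes \<delta> :: real and N l n m K :: nat
  assumes \<delta>: "0 < \<delta>" "\<delta> < 1" and n: "n \<ge> 1"
    and N: "real N \<le> 1000 * real l * real n powr ((1 - \<delta>) * real l)"
    and l: "l \<ge> 20"
    and m: "real m \<le> real n powr (99/100 * \<delta>) / real l"
    and K: "real K \<le> \<delta>/100 * real m * real l"
  shows "real (N choose m) * real n ^ K * (real K / real n) ^ (l * m) \<le> (1/100) ^ m"
proof -
  define x where "x = real n"
  define L where "L = real l"
  define c where "c = \<delta>/100"
  have x: "x \<ge> 1" using n by (simp add: x_def)
  have L: "L \<ge> 20" using l by (simp add: L_def)
  have c: "0 < c" "c \<le> 1/100" using \<delta> by (auto simp: c_def)
  have choose_le: "real (N choose m) \<le> (1000 * L) ^ m * x powr ((1 - \<delta>) * L * m)"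
  proof -
    have "N choose m \<le> N ^ m"
      using binomial_fact_pow[of N m] fact_ge_1[of m]
      by (metis dual_order.trans mult_le_mono2 mult.right_neutral)
    then have "real (N choose m) \<le> real N ^ m" by (metis of_nat_le_iff of_nat_power)
    also have "\<dots> \<le> (1000 * L * x powr ((1 - \<delta>) * L)) ^ m"
      by (intro power_mono) (use N in \<open>auto simp: x_def L_def\<close>)
    also have "\<dots> = (1000 * L) ^ m * x powr ((1 - \<delta>) * L * m)"
      using x by (simp add: power_mult_distrib powr_realpow[symmetric] powr_powr)
    finally show ?thesis .
  qed
  have pow_le: "real n ^ K \<le> x powr (c * m * L)"
    using K x by (simp add: x_def c_def L_def powr_realpow[symmetric] powr_mono)
  have ratio_le: "(real K / real n) ^ (l * m) \<le> c ^ (l * m) * x powr ((99/100 * \<delta> - 1) * L * m)"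
  proof -
    have "real K \<le> c * (real m * L)" using K by (simp add: c_def L_def mult.assoc)
    also have "\<dots> \<le> c * x powr (99/100 * \<delta>)"
      using m L c by (intro mult_left_mono) (auto simp: x_def L_def field_simps)
    finally have "real K / real n \<le> c * x powr (99/100 * \<delta> - 1)"
      using x by (simp add: x_def powr_diff divide_right_mono)
    then have "(real K / real n) ^ (l * m) \<le> (c * x powr (99/100 * \<delta> - 1)) ^ (l * m)"
      by (intro power_mono) auto
    also have "\<dots> = c ^ (l * m) * x powr ((99/100 * \<delta> - 1) * L * m)"
      using x by (simp add: power_mult_distrib powr_realpow[symmetric] powr_powr L_def mult_ac)
    finally show ?thesis .
  qed
  have "real (N choose m) * real n ^ K * (real K / real n) ^ (l * m)
     \<le> (1000 * L) ^ m * x powr ((1 - \<delta>) * L * m) * x powr (c * m * L) *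
        (c ^ (l * m) * x powr ((99/100 * \<delta> - 1) * L * m))"
    using L c by (intro mult_mono choose_le pow_le ratio_le) auto
  also have "\<dots> = (1000 * L * c ^ l) ^ m *
      x powr ((1 - \<delta>) * L * m + c * m * L + (99/100 * \<delta> - 1) * L * m)"
    by (simp add: powr_add power_mult_distrib power_mult mult_ac)
  also have "(1 - \<delta>) * L * m + c * m * L + (99/100 * \<delta> - 1) * L * m = 0"
    by (simp add: c_def algebra_simps)
  also have "(1000 * L * c ^ l) ^ m * x powr 0 \<le> (1/100) ^ m"
  proof -
    have "1000 * L * c ^ l \<le> 1000 * L * (1/100) ^ l"
      using c L by (intro mult_left_mono power_mono) auto
    also have "\<dots> \<le> 1/100" using linear_times_hundredth_pow_le[OF l] by (simp add: L_def)
    finally show ?thesis using x c L by (simp add: power_mono)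
  qed
  finally show ?thesis .
qed

lemma prob_exists_small_union_le:
  fixes \<delta> :: real and N l n :: nat
  assumes "0 < \<delta>" "\<delta> < 1" "n \<ge> 1"
    and "real N \<le> 1000 * real l * real n powr ((1 - \<delta>) * real l)"
    and "l \<ge> 20"
  shows "measure_pmf.prob (Pi_pmf {..<N} [] (\<lambda>_. replicate_pmf l (pmf_of_set {..<n})))
           {xs. \<exists>M \<subseteq> {..<N}. real (card M) \<le> real n powr (99/100 * \<delta>) / real l \<and>
                  real (card (\<Union>i\<in>M. set (xs i))) < 1/100 * \<delta> * real (card M) * real l}
         \<le> 1/99"
proof -
  define P where "P = Pi_pmf {..<N} [] (\<lambda>_. replicate_pmf l (pmf_of_set {..<n}))"
  define B where "B = real n powr (99/100 * \<delta>) / real l"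
  define K where "K = (\<lambda>m. nat \<lfloor>\<delta>/100 * real m * real l\<rfloor>)"
  define Small where "Small = (\<lambda>m. {xs :: nat \<Rightarrow> nat list.
    \<exists>M \<subseteq> {..<N}. card M = m \<and> card (\<Union>i\<in>M. set (xs i)) \<le> K m})"
  have cover: "{xs :: nat \<Rightarrow> nat list. \<exists>M \<subseteq> {..<N}. real (card M) \<le> B \<and>
                  real (card (\<Union>i\<in>M. set (xs i))) < 1/100 * \<delta> * real (card M) * real l}
      \<subseteq> (\<Union>m\<in>{1..nat \<lfloor>B\<rfloor>}. Small m)"
  proof safe
    fix xs :: "nat \<Rightarrow> nat list" and M assume M: "M \<subseteq> {..<N}" "real (card M) \<le> B"
      and small: "real (card (\<Union>i\<in>M. set (xs i))) < 1/100 * \<delta> * real (card M) * real l"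
    have size: "card M \<in> {1..nat \<lfloor>B\<rfloor>}"
      using small M(2) le_nat_floor[of "card M" B] by (cases "card M = 0") auto
    have "card (\<Union>i\<in>M. set (xs i)) \<le> K (card M)"
      using small unfolding K_def by (intro le_nat_floor) simp
    then have "xs \<in> Small (card M)" using M(1) by (auto simp: Small_def)
    then show "xs \<in> (\<Union>m\<in>{1..nat \<lfloor>B\<rfloor>}. Small m)" using size by blast
  qed
  have "measure_pmf.prob P {xs. \<exists>M \<subseteq> {..<N}. real (card M) \<le> B \<and>
                  real (card (\<Union>i\<in>M. set (xs i))) < 1/100 * \<delta> * real (card M) * real l}
      \<le> (\<Sum>m\<in>{1..nat \<lfloor>B\<rfloor>}. measure_pmf.prob P (Small m))"
    using cover by (intro order_trans[OF measure_pmf.finite_measure_mono measure_UNION_le]) auto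
  also have "\<dots> \<le> (\<Sum>m\<in>{1..nat \<lfloor>B\<rfloor>}. (1/100) ^ m)"
  proof (intro sum_mono)
    fix m assume "m \<in> {1..nat \<lfloor>B\<rfloor>}"
    then have "real m \<le> B" by (simp add: B_def le_nat_iff le_floor_iff)
    moreover have "real (K m) \<le> \<delta>/100 * real m * real l"
      unfolding K_def using assms(1) by (intro of_nat_floor) simp
    ultimately have "real (N choose m) * real n ^ K m * (real (K m) / real n) ^ (l * m) \<le> (1/100) ^ m"
      unfolding B_def by (rule union_bound_term_le[OF assms])
    moreover have "measure_pmf.prob P (Small m)
        \<le> real (N choose m) * real n ^ K m * (real (K m) / real n) ^ (l * m)"
      unfolding P_def Small_def by (rule prob_small_union_le[OF assms(3)])
    ultimately show "measure_pmf.prob P (Small m) \<le> (1/100) ^ m" by linarith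
  qed
  also have "\<dots> \<le> 1/99" by (simp add: sum_gp)
  finally show ?thesis by (simp add: P_def B_def)
qed

theorem lemma2p4:
  fixes \<delta> :: real and N l n :: nat
  assumes "0 < \<delta>" "\<delta> < 1"
    and "n \<ge> 1"
    and "real N \<le> 1000 * real l * real n powr ((1 - \<delta>) * real l)"
    and "l \<ge> 20"
  shows "measure_pmf.prob (rgp_gnp N l n)
           {G'. \<forall>M \<subseteq> {..<N}. real (card M) \<le> real n powr (99/100 * \<delta>) / real l \<longrightarrow>
                  real (card (\<Union>i\<in>M. fst G' i)) \<ge> 1/100 * \<delta> * real (card M) * real l}
         \<ge> 95/100"
proof -
  define P where "P = Pi_pmf {..<N} [] (\<lambda>_. replicate_pmf l (pmf_of_set {..<n}))"
  let ?good = "\<lambda>S. \<forall>M \<subseteq> {..<N}. real (card M) \<le> real n powr (99/100 * \<delta>) / real l \<longrightarrow>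
                  real (card (\<Union>i\<in>M. S i)) \<ge> 1/100 * \<delta> * real (card M) * real l"
  let ?bad = "{xs. \<exists>M \<subseteq> {..<N}. real (card M) \<le> real n powr (99/100 * \<delta>) / real l \<and>
                  real (card (\<Union>i\<in>M. set (xs i))) < 1/100 * \<delta> * real (card M) * real l}"
  have "measure_pmf.prob (rgp_gnp N l n) {G'. ?good (fst G')}
      = measure_pmf.prob P {xs. ?good (\<lambda>i. set (xs i))}"
    unfolding P_def by (rule prob_rgp_gnp_fst[of _ _ _ ?good])
  also have "{xs. ?good (\<lambda>i. set (xs i))} = space P - ?bad"
    by (auto simp: not_less)
  also have "measure_pmf.prob P (space P - ?bad) = 1 - measure_pmf.prob P ?bad"
    by (rule measure_pmf.prob_compl) simp
  also have "\<dots> \<ge> 1 - 1/99"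
    using prob_exists_small_union_le[OF assms] by (simp add: P_def)
  finally show ?thesis by simp
qed

end
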